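(* Let $N\ge 2$ and let $f:\mathbb{C}\to\mathbb{C}^N$ be a holomorphic map whose components are polynomials in $\zeta$ and are linearly independent over $\mathbb{C}$. Define $P_+^0 f=f$, $P_+^{k+1}f=P_+(P_+^k f)$, where $P_+ g=\partial g-g\,\frac{g^\dagger\cdot\partial g}{g^\dagger\cdot g}$ and $\partial=\partial/\partial\zeta$, $\bar\partial=\partial/\partial\bar\zeta$. For $k=0,\dots,N-1$ let $P_k=\frac{P_+^k f\otimes (P_+^k f)^\dagger}{|P_+^k f|^2}$ (defined wherever $P_+^kf\neq 0$). Let $\alpha_0,\dots,\alpha_{N-2}$ be real constants and $\mathbb{P}=\sum_{k=0}^{N-2}\alpha_k P_k$. Then, wherever all these projectors are defined, $$g_{++}:=\operatorname{tr}(\partial\mathbb{P}\,\partial\mathbb{P})=0,\qquad g_{--}:=\operatorname{tr}(\bar\partial\mathbb{P}\,\bar\partial\mathbb{P})=0,$$ i.e. the metric on the surface described by $\mathbb{P}$ (with components $g_{++}$, $g_{+-}=\operatorname{tr}(\partial\mathbb{P}\,\bar\partial\mathbb{P})$, $g_{--}$) has only the mixed component $g_{+-}$ possibly nonzero.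
   Context: Here $\zeta=\zeta_1+i\zeta_2$ is the complex coordinate on the plane obtained from $S^2$ by stereographic projection, $\dagger$ denotes Hermitian conjugation, $g^\dagger\cdot h=\sum_i \bar g^i h^i$, and $|g|^2=g^\dagger\cdot g$. The vectors $P_+^k f$ describe harmonic maps $S^2\to CP^{N-1}$; $\mathbb{P}$ is a Hermitian $N\times N$ matrix-valued function of $(\zeta,\bar\zeta)$, whose real and imaginary parts of entries define a surface in $\mathbb{R}^{N^2-1}$ with induced metric components $g_{++}=\operatorname{tr}(\partial\mathbb{P}\partial\mathbb{P})$, $g_{+-}=\operatorname{tr}(\partial\mathbb{P}\bar\partial\mathbb{P})$, $g_{--}=\overline{g_{++}}$. *)

theory Defs
  imports "HOL-Analysis.Analysis" "HOL-Computational_Algebra.Polynomial"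
begin

definition wirt :: "(complex \<Rightarrow> complex) \<Rightarrow> complex \<Rightarrow> complex" where
  "wirt F z = (frechet_derivative F (at z) 1 - \<i> * frechet_derivative F (at z) \<i>) / 2"

definition wirtbar :: "(complex \<Rightarrow> complex) \<Rightarrow> complex \<Rightarrow> complex" where
  "wirtbar F z = (frechet_derivative F (at z) 1 + \<i> * frechet_derivative F (at z) \<i>) / 2"

text \<open>Vectors in C^N are modelled as nat => complex, only indices < N matter.\<close>
definition herm :: "nat \<Rightarrow> (nat \<Rightarrow> complex) \<Rightarrow> (nat \<Rightarrow> complex) \<Rightarrow> complex" where
  "herm N u v = (\<Sum>i<N. cnj (u i) * v i)"

definition dvec :: "(complex \<Rightarrow> nat \<Rightarrow> complex) \<Rightarrow> complex \<Rightarrow> nat \<Rightarrow> complex" where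
  "dvec g z = (\<lambda>i. wirt (\<lambda>w. g w i) z)"

definition Pplus :: "nat \<Rightarrow> (complex \<Rightarrow> nat \<Rightarrow> complex) \<Rightarrow> complex \<Rightarrow> nat \<Rightarrow> complex" where
  "Pplus N g = (\<lambda>z i. dvec g z i - g z i * herm N (g z) (dvec g z) / herm N (g z) (g z))"

definition proj :: "nat \<Rightarrow> (complex \<Rightarrow> nat \<Rightarrow> complex) \<Rightarrow> nat \<Rightarrow> complex \<Rightarrow> nat \<Rightarrow> nat \<Rightarrow> complex" where
  "proj N f k z i j = (let v = (Pplus N ^^ k) f z in v i * cnj (v j) / herm N v v)"

definition trace_prod :: "nat \<Rightarrow> (nat \<Rightarrow> nat \<Rightarrow> complex) \<Rightarrow> (nat \<Rightarrow> nat \<Rightarrow> complex) \<Rightarrow> complex" where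
  "trace_prod N A B = (\<Sum>i<N. \<Sum>j<N. A i j * B j i)"

end

theory Submission
  imports Defs
begin

text \<open>Write \<open>F\<^sub>k = P\<^sub>+\<^sup>k f\<close> and \<open>\<partial>\<close>, \<open>\<partial>'\<close> for the Wirtinger derivatives in \<open>\<zeta>\<close> and its
  conjugate. Starting from \<open>\<partial>'f = 0\<close>, induction on \<open>k\<close> shows that the \<open>F\<^sub>k\<close> are mutually
  orthogonal and that \<open>\<partial>'F\<^sub>k = -(|F\<^sub>k|\<^sup>2/|F\<^sub>k\<^sub>-\<^sub>1|\<^sup>2) F\<^sub>k\<^sub>-\<^sub>1\<close>; the inductive step rests on
  \<open>\<partial>'\<partial> = \<partial>\<partial>'\<close>. Consequently \<open>\<partial>P\<^sub>k = L\<^sub>k\<^sub>+\<^sub>1 - L\<^sub>k\<close> with \<open>L\<^sub>k = F\<^sub>k F\<^sub>k\<^sub>-\<^sub>1\<^sup>\<dagger> / |F\<^sub>k\<^sub>-\<^sub>1|\<^sup>2\<close>, and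
  \<open>tr (L\<^sub>a L\<^sub>b)\<close> is a multiple of \<open>(F\<^sub>b\<^sub>-\<^sub>1\<^sup>\<dagger>F\<^sub>a) (F\<^sub>a\<^sub>-\<^sub>1\<^sup>\<dagger>F\<^sub>b)\<close>, where one factor vanishes by
  orthogonality since \<open>b - 1 = a\<close> and \<open>a - 1 = b\<close> cannot both hold. Hence \<open>tr (\<partial>\<bbbP> \<partial>\<bbbP>) = 0\<close>,
  and as \<open>\<bbbP>\<close> is Hermitian, \<open>\<partial>'\<bbbP> = (\<partial>\<bbbP>)\<^sup>\<dagger>\<close> gives the conjugate statement.\<close>

section \<open>Rational functions of \<open>\<zeta>\<close> and its conjugate\<close>

text \<open>Differentiation is done in the class of functions given by rational expressions in \<open>\<zeta>\<close>
  and its conjugate, because the two Wirtinger derivatives commute there for a purely syntactic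
  reason: they already commute on the expressions. This replaces a Schwarz-type symmetry theorem.\<close>

datatype rat_expr =
    RConst complex
  | RPoly "complex poly"
  | RAdd rat_expr rat_expr
  | RMult rat_expr rat_expr
  | RInverse rat_expr
  | RCnj rat_expr

primrec rat_eval :: "rat_expr \<Rightarrow> complex \<Rightarrow> complex" where
  "rat_eval (RConst c) x = c"
| "rat_eval (RPoly p) x = poly p x"
| "rat_eval (RAdd a b) x = rat_eval a x + rat_eval b x"
| "rat_eval (RMult a b) x = rat_eval a x * rat_eval b x"
| "rat_eval (RInverse a) x = inverse (rat_eval a x)"
| "rat_eval (RCnj a) x = cnj (rat_eval a x)"

fun rat_wirt :: "rat_expr \<Rightarrow> rat_expr" and rat_wirtbar :: "rat_expr \<Rightarrow> rat_expr" where
  "rat_wirt (RConst c) = RConst 0"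
| "rat_wirt (RPoly p) = RPoly (pderiv p)"
| "rat_wirt (RAdd a b) = RAdd (rat_wirt a) (rat_wirt b)"
| "rat_wirt (RMult a b) = RAdd (RMult (rat_wirt a) b) (RMult a (rat_wirt b))"
| "rat_wirt (RInverse a) = RMult (RConst (-1)) (RMult (rat_wirt a) (RMult (RInverse a) (RInverse a)))"
| "rat_wirt (RCnj a) = RCnj (rat_wirtbar a)"
| "rat_wirtbar (RConst c) = RConst 0"
| "rat_wirtbar (RPoly p) = RConst 0"
| "rat_wirtbar (RAdd a b) = RAdd (rat_wirtbar a) (rat_wirtbar b)"
| "rat_wirtbar (RMult a b) = RAdd (RMult (rat_wirtbar a) b) (RMult a (rat_wirtbar b))"
| "rat_wirtbar (RInverse a) = RMult (RConst (-1)) (RMult (rat_wirtbar a) (RMult (RInverse a) (RInverse a)))"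
| "rat_wirtbar (RCnj a) = RCnj (rat_wirt a)"

primrec rat_defined_on :: "complex set \<Rightarrow> rat_expr \<Rightarrow> bool" where
  "rat_defined_on U (RConst c) = True"
| "rat_defined_on U (RPoly p) = True"
| "rat_defined_on U (RAdd a b) = (rat_defined_on U a \<and> rat_defined_on U b)"
| "rat_defined_on U (RMult a b) = (rat_defined_on U a \<and> rat_defined_on U b)"
| "rat_defined_on U (RInverse a) = (rat_defined_on U a \<and> (\<forall>x\<in>U. rat_eval a x \<noteq> 0))"
| "rat_defined_on U (RCnj a) = rat_defined_on U a"

lemma rat_defined_on_wirt:
  "rat_defined_on U e \<Longrightarrow> rat_defined_on U (rat_wirt e) \<and> rat_defined_on U (rat_wirtbar e)"
  by (induction e) auto

lemma rat_defined_on_subset: "rat_defined_on U e \<Longrightarrow> V \<subseteq> U \<Longrightarrow> rat_defined_on V e"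
  by (induction e) auto

lemma has_derivative_rat_eval:
  assumes "rat_defined_on U e" "x \<in> U"
  shows "(rat_eval e has_derivative
           (\<lambda>h. rat_eval (rat_wirt e) x * h + rat_eval (rat_wirtbar e) x * cnj h)) (at x)"
  using assms
proof (induction e)
  case (RPoly p)
  then show ?case
    using poly_DERIV[of p x] by (simp add: has_field_derivative_def)
qed (auto intro!: derivative_eq_intros simp: rat_eval.simps[abs_def] algebra_simps)

lemma rat_wirtbar_wirt_commute:
  "rat_eval (rat_wirtbar (rat_wirt e)) x = rat_eval (rat_wirt (rat_wirtbar e)) x"
  by (induction e) (simp_all add: algebra_simps)

definition rational_on :: "complex set \<Rightarrow> (complex \<Rightarrow> complex) \<Rightarrow> bool" where
  "rational_on U g \<longleftrightarrow> (\<exists>e. rat_defined_on U e \<and> (\<forall>x\<in>U. g x = rat_eval e x))"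

lemma rational_on_const [intro]: "rational_on U (\<lambda>x. c)"
  unfolding rational_on_def by (rule exI[of _ "RConst c"]) simp

lemma rational_on_poly [intro]: "rational_on U (\<lambda>x. poly p x)"
  unfolding rational_on_def by (rule exI[of _ "RPoly p"]) simp

lemma rational_on_add [intro]:
  assumes "rational_on U f" "rational_on U g"
  shows "rational_on U (\<lambda>x. f x + g x)"
proof -
  obtain a b where "rat_defined_on U a" "\<forall>x\<in>U. f x = rat_eval a x"
    "rat_defined_on U b" "\<forall>x\<in>U. g x = rat_eval b x"
    using assms unfolding rational_on_def by blast
  then show ?thesis unfolding rational_on_def by (intro exI[of _ "RAdd a b"]) simp
qed

lemma rational_on_mult [intro]:
  assumes "rational_on U f" "rational_on U g"
  shows "rational_on U (\<lambda>x. f x * g x)"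
proof -
  obtain a b where "rat_defined_on U a" "\<forall>x\<in>U. f x = rat_eval a x"
    "rat_defined_on U b" "\<forall>x\<in>U. g x = rat_eval b x"
    using assms unfolding rational_on_def by blast
  then show ?thesis unfolding rational_on_def by (intro exI[of _ "RMult a b"]) simp
qed

lemma rational_on_inverse [intro]:
  assumes "rational_on U f" "\<forall>x\<in>U. f x \<noteq> 0"
  shows "rational_on U (\<lambda>x. inverse (f x))"
proof -
  obtain a where "rat_defined_on U a" "\<forall>x\<in>U. f x = rat_eval a x"
    using assms unfolding rational_on_def by blast
  with assms(2) show ?thesis unfolding rational_on_def by (intro exI[of _ "RInverse a"]) simp
qed

lemma rational_on_cnj [intro]:
  assumes "rational_on U f"
  shows "rational_on U (\<lambda>x. cnj (f x))"
proof -
  obtain a where "rat_defined_on U a" "\<forall>x\<in>U. f x = rat_eval a x"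
    using assms unfolding rational_on_def by blast
  then show ?thesis unfolding rational_on_def by (intro exI[of _ "RCnj a"]) simp
qed

lemma rational_on_diff [intro]:
  assumes "rational_on U f" "rational_on U g"
  shows "rational_on U (\<lambda>x. f x - g x)"
  using rational_on_add[OF assms(1) rational_on_mult[OF rational_on_const[of U "-1"] assms(2)]]
  by simp

lemma rational_on_divide [intro]:
  assumes "rational_on U f" "rational_on U g" "\<forall>x\<in>U. g x \<noteq> 0"
  shows "rational_on U (\<lambda>x. f x / g x)"
  using rational_on_mult[OF assms(1) rational_on_inverse[OF assms(2,3)]]
  by (simp add: divide_inverse)

lemma rational_on_sum [intro]:
  "(\<And>i. i \<in> A \<Longrightarrow> rational_on U (f i)) \<Longrightarrow> rational_on U (\<lambda>x. \<Sum>i\<in>A. f i x)"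
  by (induction A rule: infinite_finite_induct) auto

lemma rational_on_subset: "rational_on U f \<Longrightarrow> V \<subseteq> U \<Longrightarrow> rational_on V f"
  unfolding rational_on_def by (meson subsetD rat_defined_on_subset)

section \<open>Wirtinger calculus\<close>

lemma wirt_wirtbar_of_has_derivative:
  assumes "(g has_derivative L) (at x)"
  shows "wirt g x = (L 1 - \<i> * L \<i>) / 2" and "wirtbar g x = (L 1 + \<i> * L \<i>) / 2"
  using frechet_derivative_at[OF assms] by (simp_all add: wirt_def wirtbar_def)

lemma wirt_const [simp]: "wirt (\<lambda>y. c) x = 0" "wirtbar (\<lambda>y. c) x = 0"
  by (simp_all add: wirt_def wirtbar_def)

lemma wirt_cong_open:
  assumes "open U" "x \<in> U" "\<And>y. y \<in> U \<Longrightarrow> g y = h y"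
  shows "wirt g x = wirt h x" and "wirtbar g x = wirtbar h x"
proof -
  have "(g has_derivative L) (at x) \<longleftrightarrow> (h has_derivative L) (at x)" for L
    using has_derivative_transform_within_open[OF _ assms(1,2)] assms(3) by metis
  then have "frechet_derivative g (at x) = frechet_derivative h (at x)"
    unfolding frechet_derivative_def by simp
  then show "wirt g x = wirt h x" "wirtbar g x = wirtbar h x"
    unfolding wirt_def wirtbar_def by simp_all
qed

lemma wirtbar_poly: "wirtbar (\<lambda>w. poly p w) x = 0"
proof -
  have "((\<lambda>w. poly p w) has_derivative (\<lambda>h. poly (pderiv p) x * h)) (at x)"
    using poly_DERIV[of p x] by (simp add: has_field_derivative_def)
  from wirt_wirtbar_of_has_derivative(2)[OF this] show ?thesis
    by (simp add: algebra_simps)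
qed

lemma wirt_rat_eval:
  assumes "open U" "rat_defined_on U e" "\<forall>x\<in>U. g x = rat_eval e x" "x \<in> U"
  shows "wirt g x = rat_eval (rat_wirt e) x" and "wirtbar g x = rat_eval (rat_wirtbar e) x"
proof -
  have "(g has_derivative (\<lambda>h. rat_eval (rat_wirt e) x * h + rat_eval (rat_wirtbar e) x * cnj h)) (at x)"
    using has_derivative_transform_within_open[OF has_derivative_rat_eval[OF assms(2,4)] assms(1,4)]
      assms(3) by simp
  from wirt_wirtbar_of_has_derivative[OF this]
  show "wirt g x = rat_eval (rat_wirt e) x" "wirtbar g x = rat_eval (rat_wirtbar e) x"
    by (simp_all add: algebra_simps)
qed

context
  fixes U :: "complex set"
  assumes U: "open U"
begin

lemma rational_on_wirt [intro]:
  assumes "rational_on U g"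
  shows "rational_on U (wirt g)" and "rational_on U (wirtbar g)"
proof -
  obtain e where e: "rat_defined_on U e" "\<forall>x\<in>U. g x = rat_eval e x"
    using assms unfolding rational_on_def by blast
  show "rational_on U (wirt g)" "rational_on U (wirtbar g)"
    unfolding rational_on_def using wirt_rat_eval[OF U e] rat_defined_on_wirt[OF e(1)] by blast+
qed

lemma has_derivative_wirtinger:
  assumes "rational_on U g" "x \<in> U"
  shows "(g has_derivative (\<lambda>h. wirt g x * h + wirtbar g x * cnj h)) (at x)"
proof -
  obtain e where e: "rat_defined_on U e" "\<forall>x\<in>U. g x = rat_eval e x"
    using assms unfolding rational_on_def by blast
  show ?thesis
    using has_derivative_transform_within_open[OF has_derivative_rat_eval[OF e(1) assms(2)] U assms(2)]
      e(2) wirt_rat_eval[OF U e assms(2)] by simp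
qed

lemma wirtbar_wirt_commute:
  assumes "rational_on U g" "x \<in> U"
  shows "wirtbar (wirt g) x = wirt (wirtbar g) x"
proof -
  obtain e where e: "rat_defined_on U e" "\<forall>x\<in>U. g x = rat_eval e x"
    using assms unfolding rational_on_def by blast
  have "\<forall>y\<in>U. wirt g y = rat_eval (rat_wirt e) y" "\<forall>y\<in>U. wirtbar g y = rat_eval (rat_wirtbar e) y"
    using wirt_rat_eval[OF U e] by auto
  then show ?thesis
    using wirt_rat_eval[OF U _ _ assms(2)] rat_defined_on_wirt[OF e(1)] rat_wirtbar_wirt_commute
    by metis
qed

lemma rational_on_continuous_on: "rational_on U g \<Longrightarrow> continuous_on U g"
  by (meson continuous_at_imp_continuous_on has_derivative_continuous has_derivative_wirtinger)

context
  fixes x assumes x: "x \<in> U"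
begin

lemma wirt_sum:
  assumes "\<And>i. i \<in> A \<Longrightarrow> rational_on U (f i)"
  shows "wirt (\<lambda>y. \<Sum>i\<in>A. f i y) x = (\<Sum>i\<in>A. wirt (f i) x)"
    and "wirtbar (\<lambda>y. \<Sum>i\<in>A. f i y) x = (\<Sum>i\<in>A. wirtbar (f i) x)"
proof -
  have D: "((\<lambda>y. \<Sum>i\<in>A. f i y) has_derivative
      (\<lambda>h. \<Sum>i\<in>A. wirt (f i) x * h + wirtbar (f i) x * cnj h)) (at x)"
    using assms by (intro has_derivative_sum has_derivative_wirtinger x)
  show "wirt (\<lambda>y. \<Sum>i\<in>A. f i y) x = (\<Sum>i\<in>A. wirt (f i) x)"
    "wirtbar (\<lambda>y. \<Sum>i\<in>A. f i y) x = (\<Sum>i\<in>A. wirtbar (f i) x)"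
    unfolding wirt_wirtbar_of_has_derivative[OF D]
    by (simp_all add: sum.distrib sum_subtractf sum_distrib_left sum_negf algebra_simps)
qed

lemma wirt_diff:
  assumes "rational_on U f" "rational_on U g"
  shows "wirt (\<lambda>y. f y - g y) x = wirt f x - wirt g x"
    and "wirtbar (\<lambda>y. f y - g y) x = wirtbar f x - wirtbar g x"
  unfolding wirt_wirtbar_of_has_derivative[OF has_derivative_diff[OF
      has_derivative_wirtinger[OF assms(1) x] has_derivative_wirtinger[OF assms(2) x]]]
  by (simp_all add: field_simps)

lemma wirt_uminus:
  assumes "rational_on U f"
  shows "wirt (\<lambda>y. - f y) x = - wirt f x" and "wirtbar (\<lambda>y. - f y) x = - wirtbar f x"
  unfolding wirt_wirtbar_of_has_derivative[OF has_derivative_minus[OF has_derivative_wirtinger[OF assms x]]]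
  by (simp_all add: field_simps)

lemma wirt_mult:
  assumes "rational_on U f" "rational_on U g"
  shows "wirt (\<lambda>y. f y * g y) x = wirt f x * g x + f x * wirt g x"
    and "wirtbar (\<lambda>y. f y * g y) x = wirtbar f x * g x + f x * wirtbar g x"
  unfolding wirt_wirtbar_of_has_derivative[OF has_derivative_mult[OF
      has_derivative_wirtinger[OF assms(1) x] has_derivative_wirtinger[OF assms(2) x]]]
  by (simp_all add: algebra_simps)

lemma wirt_cnj:
  assumes "rational_on U f"
  shows "wirt (\<lambda>y. cnj (f y)) x = cnj (wirtbar f x)"
    and "wirtbar (\<lambda>y. cnj (f y)) x = cnj (wirt f x)"
  unfolding wirt_wirtbar_of_has_derivative[OF has_derivative_cnj[OF has_derivative_wirtinger[OF assms x]]]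
  by (simp_all add: algebra_simps)

lemma wirt_divide:
  assumes "rational_on U f" "rational_on U g" "g x \<noteq> 0"
  shows "wirt (\<lambda>y. f y / g y) x = (wirt f x * g x - f x * wirt g x) / (g x)\<^sup>2"
    and "wirtbar (\<lambda>y. f y / g y) x = (wirtbar f x * g x - f x * wirtbar g x) / (g x)\<^sup>2"
  unfolding wirt_wirtbar_of_has_derivative[OF has_derivative_divide'[OF
      has_derivative_wirtinger[OF assms(1) x] has_derivative_wirtinger[OF assms(2) x] assms(3)]]
  using assms(3) by (simp_all add: power2_eq_square field_simps)

end

end

lemma herm_commute: "herm N u v = cnj (herm N v u)"
  unfolding herm_def by (simp add: mult.commute)

lemma herm_self_real: "cnj (herm N v v) = herm N v v"
  using herm_commute[of N v v] by simp

lemma herm_scale_left: "herm N (\<lambda>i. a * u i) v = cnj a * herm N u v"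
  unfolding herm_def by (simp add: sum_distrib_left algebra_simps)

lemma herm_scale_right: "herm N u (\<lambda>i. a * v i) = a * herm N u v"
  unfolding herm_def by (simp add: sum_distrib_left algebra_simps)

lemma herm_diff_left: "herm N (\<lambda>i. u i - v i) w = herm N u w - herm N v w"
  unfolding herm_def by (simp add: sum_subtractf algebra_simps)

lemma herm_diff_right: "herm N u (\<lambda>i. v i - w i) = herm N u v - herm N u w"
  unfolding herm_def by (simp add: sum_subtractf algebra_simps)

lemma herm_self_nonzero:
  assumes "i < N" "v i \<noteq> 0"
  shows "herm N v v \<noteq> 0"
proof -
  have "herm N v v = complex_of_real (\<Sum>i<N. (cmod (v i))\<^sup>2)"
    unfolding herm_def of_real_sum by (intro sum.cong refl) (metis complex_norm_square mult.commute of_real_power)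
  moreover have "(\<Sum>i<N. (cmod (v i))\<^sup>2) > 0"
    using assms by (intro sum_pos2[of _ i]) auto
  ultimately show ?thesis by (simp del: of_real_sum of_real_power)
qed

lemma rational_on_herm [intro]:
  assumes "\<And>i. i < N \<Longrightarrow> rational_on U (\<lambda>w. G w i)" "\<And>i. i < N \<Longrightarrow> rational_on U (\<lambda>w. H w i)"
  shows "rational_on U (\<lambda>w. herm N (G w) (H w))"
  unfolding herm_def using assms by (intro rational_on_sum rational_on_mult rational_on_cnj) auto

lemma wirt_herm:
  assumes "open U" "x \<in> U"
    and "\<And>i. i < N \<Longrightarrow> rational_on U (\<lambda>w. G w i)" "\<And>i. i < N \<Longrightarrow> rational_on U (\<lambda>w. H w i)"
  shows "wirt (\<lambda>w. herm N (G w) (H w)) x =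
           herm N (\<lambda>i. wirtbar (\<lambda>w. G w i) x) (H x) + herm N (G x) (\<lambda>i. wirt (\<lambda>w. H w i) x)"
    and "wirtbar (\<lambda>w. herm N (G w) (H w)) x =
           herm N (\<lambda>i. wirt (\<lambda>w. G w i) x) (H x) + herm N (G x) (\<lambda>i. wirtbar (\<lambda>w. H w i) x)"
proof -
  have terms: "\<And>i. i \<in> {..<N} \<Longrightarrow> rational_on U (\<lambda>w. cnj (G w i) * H w i)"
    using assms by (auto intro!: rational_on_mult rational_on_cnj)
  have "wirt (\<lambda>w. cnj (G w i) * H w i) x =
          cnj (wirtbar (\<lambda>w. G w i) x) * H x i + cnj (G x i) * wirt (\<lambda>w. H w i) x"
    and "wirtbar (\<lambda>w. cnj (G w i) * H w i) x =
          cnj (wirt (\<lambda>w. G w i) x) * H x i + cnj (G x i) * wirtbar (\<lambda>w. H w i) x"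
    if "i < N" for i
    using assms that by (simp_all add: wirt_mult wirt_cnj rational_on_cnj)
  moreover have "wirt (\<lambda>w. herm N (G w) (H w)) x = (\<Sum>i<N. wirt (\<lambda>w. cnj (G w i) * H w i) x)"
    and "wirtbar (\<lambda>w. herm N (G w) (H w)) x = (\<Sum>i<N. wirtbar (\<lambda>w. cnj (G w i) * H w i) x)"
    unfolding herm_def by (rule wirt_sum[OF assms(1,2) terms], assumption)+
  ultimately show "wirt (\<lambda>w. herm N (G w) (H w)) x =
           herm N (\<lambda>i. wirtbar (\<lambda>w. G w i) x) (H x) + herm N (G x) (\<lambda>i. wirt (\<lambda>w. H w i) x)"
    and "wirtbar (\<lambda>w. herm N (G w) (H w)) x =
           herm N (\<lambda>i. wirt (\<lambda>w. G w i) x) (H x) + herm N (G x) (\<lambda>i. wirtbar (\<lambda>w. H w i) x)"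
    unfolding herm_def sum.distrib[symmetric] by simp_all
qed

lemma trace_prod_sum:
  "trace_prod N (\<lambda>i l. \<Sum>k\<in>K. X k i l) (\<lambda>i l. \<Sum>k\<in>K. Y k i l) =
     (\<Sum>k\<in>K. \<Sum>k'\<in>K. trace_prod N (X k) (Y k'))"
proof -
  have "trace_prod N (\<lambda>i l. \<Sum>k\<in>K. X k i l) (\<lambda>i l. \<Sum>k\<in>K. Y k i l) =
      (\<Sum>i<N. \<Sum>l<N. \<Sum>k\<in>K. \<Sum>k'\<in>K. X k i l * Y k' l i)"
    unfolding trace_prod_def by (simp add: sum_product)
  also have "\<dots> = (\<Sum>i<N. \<Sum>k\<in>K. \<Sum>l<N. \<Sum>k'\<in>K. X k i l * Y k' l i)"
    by (rule sum.cong[OF refl], rule sum.swap)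
  also have "\<dots> = (\<Sum>k\<in>K. \<Sum>i<N. \<Sum>l<N. \<Sum>k'\<in>K. X k i l * Y k' l i)"
    by (rule sum.swap)
  also have "\<dots> = (\<Sum>k\<in>K. \<Sum>i<N. \<Sum>k'\<in>K. \<Sum>l<N. X k i l * Y k' l i)"
    by (intro sum.cong refl, rule sum.swap)
  also have "\<dots> = (\<Sum>k\<in>K. \<Sum>k'\<in>K. trace_prod N (X k) (Y k'))"
    unfolding trace_prod_def by (intro sum.cong refl, rule sum.swap)
  finally show ?thesis .
qed

lemma trace_prod_scaled_diff:
  "trace_prod N (\<lambda>i l. a * (P i l - Q i l)) (\<lambda>i l. b * (R i l - S i l)) =
     a * b * (trace_prod N P R - trace_prod N P S - trace_prod N Q R + trace_prod N Q S)"
  unfolding trace_prod_def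
  by (simp add: sum_subtractf sum.distrib sum_distrib_left algebra_simps)

lemma trace_prod_cnj_transpose:
  "trace_prod N (\<lambda>i j. cnj (X j i)) (\<lambda>i j. cnj (Y j i)) = cnj (trace_prod N Y X)"
  unfolding trace_prod_def cnj_sum by (simp add: mult.commute)

section \<open>The harmonic sequence \<open>P\<^sub>+\<^sup>k f\<close>\<close>

lemma rational_on_Pplus:
  assumes "open U" "\<And>i. rational_on U (\<lambda>w. g w i)" "\<And>x. x \<in> U \<Longrightarrow> herm N (g x) (g x) \<noteq> 0"
  shows "rational_on U (\<lambda>w. Pplus N g w i)"
  unfolding Pplus_def dvec_def using assms
  by (intro rational_on_diff rational_on_mult rational_on_divide rational_on_herm rational_on_wirt) auto

lemma rational_on_funpow_Pplus:
  assumes "open U" "\<And>i. rational_on U (\<lambda>w. f w i)"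
    and "\<And>j x. j < k \<Longrightarrow> x \<in> U \<Longrightarrow> herm N ((Pplus N ^^ j) f x) ((Pplus N ^^ j) f x) \<noteq> 0"
  shows "rational_on U (\<lambda>w. (Pplus N ^^ k) f w i)"
  using assms(3)
proof (induction k arbitrary: i)
  case 0
  then show ?case using assms(2) by simp
next
  case (Suc k)
  then show ?case using rational_on_Pplus[OF assms(1)] by simp
qed

lemma open_Pplus_nonvanishing:
  assumes "\<And>i. rational_on UNIV (\<lambda>w. f w i)"
  shows "open {x. \<forall>j<k. herm N ((Pplus N ^^ j) f x) ((Pplus N ^^ j) f x) \<noteq> 0}"
proof (induction k)
  case 0
  then show ?case by simp
next
  case (Suc k)
  let ?V = "{x. \<forall>j<k. herm N ((Pplus N ^^ j) f x) ((Pplus N ^^ j) f x) \<noteq> 0}"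
  have "rational_on ?V (\<lambda>w. (Pplus N ^^ k) f w i)" for i
    by (rule rational_on_funpow_Pplus[OF Suc.IH rational_on_subset[OF assms]]) auto
  then have "continuous_on ?V (\<lambda>x. herm N ((Pplus N ^^ k) f x) ((Pplus N ^^ k) f x))"
    by (intro rational_on_continuous_on[OF Suc.IH] rational_on_herm)
  then have "open (?V \<inter> (\<lambda>x. herm N ((Pplus N ^^ k) f x) ((Pplus N ^^ k) f x)) -` (- {0}))"
    by (rule continuous_open_preimage[OF _ Suc.IH]) (simp add: open_Compl)
  moreover have "?V \<inter> (\<lambda>x. herm N ((Pplus N ^^ k) f x) ((Pplus N ^^ k) f x)) -` (- {0}) =
      {x. \<forall>j<Suc k. herm N ((Pplus N ^^ j) f x) ((Pplus N ^^ j) f x) \<noteq> 0}"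
    by (auto simp: less_Suc_eq)
  ultimately show ?case by simp
qed

locale harmonic_sequence =
  fixes N :: nat and f :: "complex \<Rightarrow> nat \<Rightarrow> complex" and U :: "complex set" and m :: nat
  assumes open_U: "open U"
    and rational_f: "\<And>i. rational_on U (\<lambda>w. f w i)"
    and holomorphic_f: "\<And>x i. x \<in> U \<Longrightarrow> wirtbar (\<lambda>w. f w i) x = 0"
    and nonvanishing: "\<And>k x. k \<le> m \<Longrightarrow> x \<in> U \<Longrightarrow> herm N ((Pplus N ^^ k) f x) ((Pplus N ^^ k) f x) \<noteq> 0"
begin

definition F :: "nat \<Rightarrow> complex \<Rightarrow> nat \<Rightarrow> complex" where
  "F k = (Pplus N ^^ k) f"

abbreviation sqnorm :: "nat \<Rightarrow> complex \<Rightarrow> complex" where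
  "sqnorm k x \<equiv> herm N (F k x) (F k x)"

abbreviation dF :: "nat \<Rightarrow> complex \<Rightarrow> nat \<Rightarrow> complex" where
  "dF k x i \<equiv> wirt (\<lambda>w. F k w i) x"

abbreviation dbarF :: "nat \<Rightarrow> complex \<Rightarrow> nat \<Rightarrow> complex" where
  "dbarF k x i \<equiv> wirtbar (\<lambda>w. F k w i) x"

definition beta :: "nat \<Rightarrow> complex \<Rightarrow> complex" where
  "beta k x = herm N (F k x) (dF k x) / sqnorm k x"

definition gamma :: "nat \<Rightarrow> complex \<Rightarrow> complex" where
  "gamma k x = (if k = 0 then 0 else sqnorm k x / sqnorm (k - 1) x)"

lemma F_0: "F 0 = f"
  by (simp add: F_def)

lemma F_Suc: "F (Suc k) = Pplus N (F k)"
  by (simp add: F_def)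

lemma sqnorm_nonzero: "k \<le> m \<Longrightarrow> x \<in> U \<Longrightarrow> sqnorm k x \<noteq> 0"
  unfolding F_def by (rule nonvanishing)

lemma rational_F [intro]: "k \<le> Suc m \<Longrightarrow> rational_on U (\<lambda>w. F k w i)"
  unfolding F_def by (intro rational_on_funpow_Pplus open_U rational_f nonvanishing) auto

lemma rational_dF [intro]: "k \<le> Suc m \<Longrightarrow> rational_on U (\<lambda>w. dF k w i)"
  using rational_on_wirt(1)[OF open_U rational_F] by simp

lemma rational_sqnorm [intro]: "k \<le> Suc m \<Longrightarrow> rational_on U (sqnorm k)"
  by (intro rational_on_herm rational_F)

lemma rational_beta [intro]: "k \<le> m \<Longrightarrow> rational_on U (beta k)"
  unfolding beta_def[abs_def] using sqnorm_nonzero by (intro rational_on_divide rational_on_herm) auto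

lemma rational_gamma [intro]: "k \<le> m \<Longrightarrow> rational_on U (gamma k)"
  unfolding gamma_def[abs_def] using sqnorm_nonzero
  by (cases "k = 0") (auto intro!: rational_on_divide rational_sqnorm)

lemma F_Suc_apply: "F (Suc k) x i = dF k x i - F k x i * beta k x"
  by (simp add: F_Suc Pplus_def dvec_def beta_def)

lemma herm_F_dF: "k \<le> m \<Longrightarrow> x \<in> U \<Longrightarrow> herm N (F k x) (dF k x) = beta k x * sqnorm k x"
  unfolding beta_def using sqnorm_nonzero by simp

lemma gamma_real: "cnj (gamma k x) = gamma k x"
  unfolding gamma_def by (simp add: herm_self_real)

text \<open>Since \<open>gamma 0 = 0\<close>, the truncated index in \<open>F (k - 1)\<close> is harmless:
  \<open>dbar_lowering 0\<close> just says that \<open>f\<close> is holomorphic.\<close>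

definition dbar_lowering :: "nat \<Rightarrow> bool" where
  "dbar_lowering k \<longleftrightarrow> (\<forall>x\<in>U. \<forall>i. dbarF k x i = - (gamma k x * F (k - 1) x i))"

definition orthogonal_F :: "nat \<Rightarrow> nat \<Rightarrow> bool" where
  "orthogonal_F j l \<longleftrightarrow> (\<forall>x\<in>U. herm N (F j x) (F l x) = 0)"

lemma herm_dbarF:
  assumes "dbar_lowering k" "x \<in> U"
  shows "herm N (dbarF k x) G = - (gamma k x * herm N (F (k - 1) x) G)"
    and "herm N G (dbarF k x) = - (gamma k x * herm N G (F (k - 1) x))"
  using assms unfolding dbar_lowering_def herm_def
  by (simp_all add: gamma_real sum_negf sum_distrib_left algebra_simps)

lemma gamma_herm_pred:
  assumes "0 < k \<Longrightarrow> orthogonal_F (k - 1) k" "x \<in> U"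
  shows "gamma k x * herm N (F (k - 1) x) (F k x) = 0"
    and "gamma k x * herm N (F k x) (F (k - 1) x) = 0"
  using assms herm_commute[of N "F k x" "F (k - 1) x"]
  unfolding orthogonal_F_def gamma_def by auto

lemma wirt_sqnorm:
  assumes k: "k \<le> m" and x: "x \<in> U" and lowering: "dbar_lowering k"
    and orth: "0 < k \<Longrightarrow> orthogonal_F (k - 1) k"
  shows "wirt (sqnorm k) x = beta k x * sqnorm k x"
    and "wirtbar (sqnorm k) x = cnj (beta k x) * sqnorm k x"
proof -
  have "\<And>i. rational_on U (\<lambda>w. F k w i)" using k by auto
  note herm_rule = wirt_herm[OF open_U x this this]
  show "wirt (sqnorm k) x = beta k x * sqnorm k x"
    using herm_rule(1) herm_dbarF(1)[OF lowering x] gamma_herm_pred(1)[OF orth x] herm_F_dF[OF k x]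
    by simp
  show "wirtbar (sqnorm k) x = cnj (beta k x) * sqnorm k x"
    using herm_rule(2) herm_dbarF(2)[OF lowering x] gamma_herm_pred(2)[OF orth x] herm_F_dF[OF k x]
      herm_commute[of N "dF k x" "F k x"]
    by (simp add: herm_self_real)
qed

lemma sqnorm_Suc:
  assumes "k \<le> m" "x \<in> U"
  shows "sqnorm (Suc k) x = herm N (dF k x) (dF k x) - cnj (beta k x) * beta k x * sqnorm k x"
proof -
  have "F (Suc k) x = (\<lambda>i. dF k x i - beta k x * F k x i)"
    unfolding fun_eq_iff F_Suc_apply by (simp add: mult.commute)
  moreover have "herm N (dF k x) (F k x) = cnj (beta k x) * sqnorm k x"
    using herm_commute[of N "dF k x" "F k x"] herm_F_dF[OF assms] by (simp add: herm_self_real)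
  ultimately show ?thesis
    using herm_F_dF[OF assms]
    by (simp add: herm_diff_left herm_diff_right herm_scale_left herm_scale_right algebra_simps)
qed

context
  fixes k :: nat
  assumes k: "k \<le> m"
    and lowering: "\<And>j. j \<le> k \<Longrightarrow> dbar_lowering j"
    and orth: "\<And>j l. j < l \<Longrightarrow> l \<le> k \<Longrightarrow> orthogonal_F j l"
begin

lemma wirt_gamma:
  assumes x: "x \<in> U"
  shows "wirt (gamma k) x = gamma k x * (beta k x - beta (k - 1) x)"
proof (cases "k = 0")
  case True
  then have "gamma k = (\<lambda>w. 0)" by (simp add: gamma_def fun_eq_iff)
  then show ?thesis by (simp add: True gamma_def)
next
  case False
  have gamma_k: "gamma k = (\<lambda>w. sqnorm k w / sqnorm (k - 1) w)"
    using False by (simp add: gamma_def fun_eq_iff)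
  have nz: "sqnorm (k - 1) x \<noteq> 0" using sqnorm_nonzero k x by simp
  have d_k: "wirt (sqnorm k) x = beta k x * sqnorm k x"
    using wirt_sqnorm(1)[of k x] k x lowering orth by simp
  have d_pred: "wirt (sqnorm (k - 1)) x = beta (k - 1) x * sqnorm (k - 1) x"
    using wirt_sqnorm(1)[of "k - 1" x] k x lowering orth by simp
  have "wirt (gamma k) x =
      (wirt (sqnorm k) x * sqnorm (k - 1) x - sqnorm k x * wirt (sqnorm (k - 1)) x) / (sqnorm (k - 1) x)\<^sup>2"
    unfolding gamma_k using k nz by (intro wirt_divide(1)[OF open_U x] rational_sqnorm) auto
  also have "\<dots> = gamma k x * (beta k x - beta (k - 1) x)"
    unfolding d_k d_pred using False nz by (simp add: gamma_def power2_eq_square field_simps)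
  finally show ?thesis .
qed

lemma wirtbar_dF:
  assumes x: "x \<in> U"
  shows "wirtbar (\<lambda>w. dF k w i) x = - (gamma k x * (beta k x * F (k - 1) x i + F k x i))"
proof -
  have pred: "gamma k x * dF (k - 1) x i = gamma k x * (F k x i + beta (k - 1) x * F (k - 1) x i)"
    using F_Suc_apply[of "k - 1" x i] by (cases "k = 0") (simp_all add: gamma_def)
  have "wirtbar (\<lambda>w. dF k w i) x = wirt (\<lambda>w. dbarF k w i) x"
    using wirtbar_wirt_commute[OF open_U rational_F x] k by simp
  also have "\<dots> = wirt (\<lambda>w. - (gamma k w * F (k - 1) w i)) x"
    using lowering[of k] by (intro wirt_cong_open(1)[OF open_U x]) (simp add: dbar_lowering_def)
  also have "\<dots> = - (wirt (gamma k) x * F (k - 1) x i + gamma k x * dF (k - 1) x i)"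
    using wirt_uminus(1)[OF open_U x rational_on_mult[OF rational_gamma[OF k] rational_F]]
      wirt_mult(1)[OF open_U x rational_gamma[OF k] rational_F] k
    by simp
  also have "\<dots> = - (gamma k x * (beta k x * F (k - 1) x i + F k x i))"
    unfolding wirt_gamma[OF x] pred by (simp add: algebra_simps)
  finally show ?thesis .
qed

lemma wirtbar_herm_F_dF:
  assumes x: "x \<in> U"
  shows "wirtbar (\<lambda>w. herm N (F k w) (dF k w)) x = herm N (dF k x) (dF k x) - gamma k x * sqnorm k x"
proof -
  have orth_pred: "gamma k x * herm N (F k x) (F (k - 1) x) = 0"
    using gamma_herm_pred(2)[of k x] orth x by simp
  have "wirtbar (\<lambda>w. herm N (F k w) (dF k w)) x =
      herm N (dF k x) (dF k x) + herm N (F k x) (\<lambda>i. wirtbar (\<lambda>w. dF k w i) x)"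
    using k by (intro wirt_herm(2)[OF open_U x]) auto
  also have "\<dots> = herm N (dF k x) (dF k x)
      - beta k x * (gamma k x * herm N (F k x) (F (k - 1) x)) - gamma k x * sqnorm k x"
    unfolding wirtbar_dF[OF x] herm_def
    by (simp add: sum_subtractf sum_negf sum.distrib sum_distrib_left algebra_simps)
  finally show ?thesis unfolding orth_pred by simp
qed

lemma wirtbar_beta:
  assumes x: "x \<in> U"
  shows "wirtbar (beta k) x = sqnorm (Suc k) x / sqnorm k x - gamma k x"
proof -
  have nz: "sqnorm k x \<noteq> 0" using sqnorm_nonzero k x by simp
  have d_k: "wirtbar (sqnorm k) x = cnj (beta k x) * sqnorm k x"
    using wirt_sqnorm(2)[of k x] k x lowering orth by simp
  have "wirtbar (beta k) x = (wirtbar (\<lambda>w. herm N (F k w) (dF k w)) x * sqnorm k x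
      - herm N (F k x) (dF k x) * wirtbar (sqnorm k) x) / (sqnorm k x)\<^sup>2"
    unfolding beta_def[abs_def] using k nz
    by (intro wirt_divide(2)[OF open_U x] rational_on_herm rational_F rational_dF rational_sqnorm) auto
  also have "\<dots> = (herm N (dF k x) (dF k x) - gamma k x * sqnorm k x
      - cnj (beta k x) * beta k x * sqnorm k x) / sqnorm k x"
    unfolding wirtbar_herm_F_dF[OF x] d_k herm_F_dF[OF k x] using nz
    by (simp add: power2_eq_square field_simps)
  also have "\<dots> = sqnorm (Suc k) x / sqnorm k x - gamma k x"
    unfolding sqnorm_Suc[OF k x] using nz by (simp add: field_simps)
  finally show ?thesis .
qed

lemma dbar_lowering_Suc: "dbar_lowering (Suc k)"
  unfolding dbar_lowering_def
proof (intro ballI allI)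
  fix x i assume x: "x \<in> U"
  have nz: "sqnorm k x \<noteq> 0" using sqnorm_nonzero k x by simp
  have "dbarF (Suc k) x i = wirtbar (\<lambda>w. dF k w i - F k w i * beta k w) x"
    unfolding F_Suc_apply ..
  also have "\<dots> = wirtbar (\<lambda>w. dF k w i) x - (dbarF k x i * beta k x + F k x i * wirtbar (beta k) x)"
    using wirt_diff(2)[OF open_U x rational_dF rational_on_mult[OF rational_F rational_beta[OF k]]]
      wirt_mult(2)[OF open_U x rational_F rational_beta[OF k]] k
    by simp
  also have "\<dots> = - (gamma (Suc k) x * F k x i)"
    unfolding wirtbar_dF[OF x] wirtbar_beta[OF x] using lowering[of k] x nz
    by (simp add: dbar_lowering_def gamma_def field_simps)
  finally show "dbarF (Suc k) x i = - (gamma (Suc k) x * F (Suc k - 1) x i)"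
    by simp
qed

lemma orthogonal_F_Suc:
  assumes "j \<le> k"
  shows "orthogonal_F j (Suc k)"
  unfolding orthogonal_F_def
proof
  fix x assume x: "x \<in> U"
  have expand: "herm N (F j x) (F (Suc k) x) = herm N (F j x) (dF k x) - beta k x * herm N (F j x) (F k x)"
    unfolding herm_def F_Suc_apply by (simp add: sum_subtractf sum_distrib_left algebra_simps)
  show "herm N (F j x) (F (Suc k) x) = 0"
  proof (cases "j = k")
    case True
    then show ?thesis using expand herm_F_dF[OF k x] by simp
  next
    case False
    then have "j < k" using assms by simp
    then have orth_jk: "\<forall>y\<in>U. herm N (F j y) (F k y) = 0"
      using orth unfolding orthogonal_F_def by blast
    have orth_pred: "herm N (F (j - 1) x) (F k x) = 0"
      using orth[of "j - 1" k] \<open>j < k\<close> x unfolding orthogonal_F_def by simp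
    have "0 = wirt (\<lambda>w. herm N (F j w) (F k w)) x"
      using wirt_cong_open(1)[OF open_U x, of "\<lambda>w. herm N (F j w) (F k w)" "\<lambda>w. 0"] orth_jk by simp
    also have "\<dots> = herm N (dbarF j x) (F k x) + herm N (F j x) (dF k x)"
      using k \<open>j < k\<close> by (intro wirt_herm(1)[OF open_U x]) auto
    also have "\<dots> = herm N (F j x) (dF k x)"
      using herm_dbarF(1)[OF lowering x, of j] \<open>j < k\<close> orth_pred by simp
    finally show ?thesis using expand orth_jk x by simp
  qed
qed

end

lemma harmonic_relations:
  "k \<le> m \<Longrightarrow> (\<forall>j\<le>k. dbar_lowering j) \<and> (\<forall>l\<le>k. \<forall>j<l. orthogonal_F j l)"
proof (induction k)
  case 0
  have "dbar_lowering 0"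
    using holomorphic_f by (simp add: dbar_lowering_def gamma_def F_0)
  then show ?case by simp
next
  case (Suc k)
  then have k: "k \<le> m" and IH: "\<forall>j\<le>k. dbar_lowering j" "\<forall>l\<le>k. \<forall>j<l. orthogonal_F j l"
    by auto
  have "dbar_lowering (Suc k)"
    by (rule dbar_lowering_Suc[OF k]) (use IH in auto)
  moreover have "orthogonal_F j (Suc k)" if "j \<le> k" for j
    by (rule orthogonal_F_Suc[OF k _ _ that]) (use IH in auto)
  ultimately show ?case
    using IH by (auto simp: le_Suc_eq less_Suc_eq_le)
qed

lemma dbar_lowering_le: "k \<le> m \<Longrightarrow> dbar_lowering k"
  using harmonic_relations by blast

lemma herm_F_F_eq_0:
  assumes "j \<le> Suc m" "l \<le> Suc m" "j \<noteq> l" "x \<in> U"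
  shows "herm N (F j x) (F l x) = 0"
proof -
  have "orthogonal_F j l" if "j < l" "l \<le> Suc m" for j l
  proof (cases "l = Suc m")
    case True
    then show ?thesis
      using orthogonal_F_Suc[of m j] harmonic_relations[of m] that by auto
  next
    case False
    then show ?thesis
      using harmonic_relations[of m] that by auto
  qed
  then show ?thesis
    using assms herm_commute[of N "F j x" "F l x"] unfolding orthogonal_F_def
    by (metis complex_cnj_zero linorder_neqE_nat)
qed

end

section \<open>The projectors \<open>P\<^sub>k\<close>\<close>

context harmonic_sequence
begin

definition ladder :: "nat \<Rightarrow> complex \<Rightarrow> nat \<Rightarrow> nat \<Rightarrow> complex" where
  "ladder k x i l = (if k = 0 then 0 else F k x i * cnj (F (k - 1) x l) / sqnorm (k - 1) x)"

lemma proj_eq: "proj N f k w i l = F k w i * cnj (F k w l) / sqnorm k w"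
  by (simp add: proj_def F_def Let_def)

lemma rational_proj [intro]: "k \<le> m \<Longrightarrow> rational_on U (\<lambda>w. proj N f k w i l)"
  unfolding proj_eq using sqnorm_nonzero
  by (intro rational_on_divide rational_on_mult rational_on_cnj rational_F rational_sqnorm) auto

lemma wirt_proj:
  assumes k: "k \<le> m" and x: "x \<in> U"
  shows "wirt (\<lambda>w. proj N f k w i l) x = ladder (Suc k) x i l - ladder k x i l"
proof -
  have nz: "sqnorm k x \<noteq> 0" using sqnorm_nonzero k x by simp
  have lowering: "dbarF k x l = - (gamma k x * F (k - 1) x l)"
    using dbar_lowering_le[OF k] x unfolding dbar_lowering_def by simp
  have d_sqnorm: "wirt (sqnorm k) x = beta k x * sqnorm k x"
    using wirt_sqnorm(1)[OF k x dbar_lowering_le[OF k]] harmonic_relations[OF k] by simp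
  have d_num: "wirt (\<lambda>w. F k w i * cnj (F k w l)) x = dF k x i * cnj (F k x l) + F k x i * cnj (dbarF k x l)"
    using wirt_mult(1)[OF open_U x rational_F rational_on_cnj[OF rational_F]]
      wirt_cnj(1)[OF open_U x rational_F] k
    by simp
  have "wirt (\<lambda>w. proj N f k w i l) x = (wirt (\<lambda>w. F k w i * cnj (F k w l)) x * sqnorm k x
      - F k x i * cnj (F k x l) * wirt (sqnorm k) x) / (sqnorm k x)\<^sup>2"
    unfolding proj_eq using k nz
    by (intro wirt_divide(1)[OF open_U x] rational_on_mult rational_on_cnj rational_F rational_sqnorm) auto
  also have "\<dots> = (F (Suc k) x i * cnj (F k x l) - gamma k x * F k x i * cnj (F (k - 1) x l)) / sqnorm k x"
    unfolding d_num d_sqnorm lowering F_Suc_apply using nz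
    by (simp add: gamma_real power2_eq_square field_simps)
  also have "\<dots> = ladder (Suc k) x i l - ladder k x i l"
    using nz sqnorm_nonzero[of "k - 1" x] k x
    by (cases "k = 0") (simp_all add: ladder_def gamma_def field_simps)
  finally show ?thesis .
qed

lemma trace_prod_ladder:
  assumes "a \<le> Suc m" "b \<le> Suc m" "x \<in> U"
  shows "trace_prod N (ladder a x) (ladder b x) = 0"
proof (cases "a = 0 \<or> b = 0")
  case True
  then show ?thesis by (auto simp: ladder_def trace_prod_def)
next
  case False
  have "(\<Sum>i<N. \<Sum>l<N. F a x i * cnj (F (a - 1) x l) * (F b x l * cnj (F (b - 1) x i))) =
      herm N (F (b - 1) x) (F a x) * herm N (F (a - 1) x) (F b x)"
    unfolding herm_def sum_product by (intro sum.cong refl) (simp add: algebra_simps)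
  then have "trace_prod N (ladder a x) (ladder b x) =
      herm N (F (b - 1) x) (F a x) * herm N (F (a - 1) x) (F b x) / (sqnorm (a - 1) x * sqnorm (b - 1) x)"
    using False by (simp add: trace_prod_def ladder_def sum_divide_distrib[symmetric])
  moreover have "herm N (F (b - 1) x) (F a x) = 0 \<or> herm N (F (a - 1) x) (F b x) = 0"
    using herm_F_F_eq_0 assms False by (cases "b - 1 = a") auto
  ultimately show ?thesis by auto
qed

theorem trace_prod_wirt_sum_proj:
  assumes x: "x \<in> U"
  shows "trace_prod N (\<lambda>i l. wirt (\<lambda>w. \<Sum>k\<le>m. c k * proj N f k w i l) x)
                      (\<lambda>i l. wirt (\<lambda>w. \<Sum>k\<le>m. c k * proj N f k w i l) x) = 0"
proof -
  have derivs: "wirt (\<lambda>w. \<Sum>k\<le>m. c k * proj N f k w i l) x =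
      (\<Sum>k\<le>m. c k * (ladder (Suc k) x i l - ladder k x i l))" for i l
  proof -
    have "wirt (\<lambda>w. \<Sum>k\<le>m. c k * proj N f k w i l) x = (\<Sum>k\<le>m. wirt (\<lambda>w. c k * proj N f k w i l) x)"
      by (rule wirt_sum(1)[OF open_U x]) auto
    also have "\<dots> = (\<Sum>k\<le>m. c k * (ladder (Suc k) x i l - ladder k x i l))"
      using wirt_mult(1)[OF open_U x rational_on_const rational_proj] wirt_proj x
      by (intro sum.cong refl) simp
    finally show ?thesis .
  qed
  show ?thesis
    unfolding derivs trace_prod_sum trace_prod_scaled_diff
    using trace_prod_ladder x by (intro sum.neutral ballI) auto
qed

theorem trace_prod_wirtbar_sum_proj:
  fixes \<alpha> :: "nat \<Rightarrow> real"
  assumes x: "x \<in> U"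
  shows "trace_prod N (\<lambda>i l. wirtbar (\<lambda>w. \<Sum>k\<le>m. of_real (\<alpha> k) * proj N f k w i l) x)
                      (\<lambda>i l. wirtbar (\<lambda>w. \<Sum>k\<le>m. of_real (\<alpha> k) * proj N f k w i l) x) = 0"
proof -
  have hermitian: "(\<lambda>w. \<Sum>k\<le>m. of_real (\<alpha> k) * proj N f k w i l) =
      (\<lambda>w. cnj (\<Sum>k\<le>m. of_real (\<alpha> k) * proj N f k w l i))" for i l
    unfolding proj_eq cnj_sum by (intro ext sum.cong refl) (simp add: herm_self_real)
  have "wirtbar (\<lambda>w. \<Sum>k\<le>m. of_real (\<alpha> k) * proj N f k w i l) x =
      cnj (wirt (\<lambda>w. \<Sum>k\<le>m. of_real (\<alpha> k) * proj N f k w l i) x)" for i l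
    unfolding hermitian[of i l]
    by (rule wirt_cnj(2)[OF open_U x]) (auto intro!: rational_on_sum rational_on_mult rational_proj)
  then show ?thesis
    using trace_prod_cnj_transpose trace_prod_wirt_sum_proj[OF x] by simp
qed

end

theorem mainTheorem1:
  fixes N :: nat and p :: "nat \<Rightarrow> complex poly" and \<alpha> :: "nat \<Rightarrow> real"
    and f :: "complex \<Rightarrow> nat \<Rightarrow> complex" and PP :: "complex \<Rightarrow> nat \<Rightarrow> nat \<Rightarrow> complex"
    and z :: complex
  assumes N2: "N \<ge> 2"
    and f_def: "f = (\<lambda>\<zeta> i. poly (p i) \<zeta>)"
    and linindep: "\<And>c :: nat \<Rightarrow> complex.
        (\<forall>\<zeta>. (\<Sum>i<N. c i * poly (p i) \<zeta>) = 0) \<Longrightarrow> (\<forall>i<N. c i = 0)"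
    and PP_def: "PP = (\<lambda>\<zeta> i j. \<Sum>k\<le>N - 2. complex_of_real (\<alpha> k) * proj N f k \<zeta> i j)"
    and defined: "\<forall>k\<le>N - 2. (\<exists>i<N. (Pplus N ^^ k) f z i \<noteq> 0)"
  shows "trace_prod N (\<lambda>i j. wirt (\<lambda>\<zeta>. PP \<zeta> i j) z) (\<lambda>i j. wirt (\<lambda>\<zeta>. PP \<zeta> i j) z) = 0
       \<and> trace_prod N (\<lambda>i j. wirtbar (\<lambda>\<zeta>. PP \<zeta> i j) z) (\<lambda>i j. wirtbar (\<lambda>\<zeta>. PP \<zeta> i j) z) = 0"
proof -
  define U where "U = {x. \<forall>k<Suc (N - 2). herm N ((Pplus N ^^ k) f x) ((Pplus N ^^ k) f x) \<noteq> 0}"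
  have rational_f: "rational_on UNIV (\<lambda>w. f w i)" for i
    unfolding f_def by (rule rational_on_poly)
  have "open U"
    unfolding U_def by (rule open_Pplus_nonvanishing[OF rational_f])
  moreover have "rational_on U (\<lambda>w. f w i)" for i
    by (rule rational_on_subset[OF rational_f]) simp
  moreover have "wirtbar (\<lambda>w. f w i) x = 0" for x i
    unfolding f_def by (rule wirtbar_poly)
  ultimately interpret harmonic_sequence N f U "N - 2"
    by unfold_locales (auto simp: U_def)
  have "z \<in> U"
    unfolding U_def using defined herm_self_nonzero by (auto simp: less_Suc_eq_le)
  then show ?thesis
    unfolding PP_def
    using trace_prod_wirt_sum_proj[where c = "\<lambda>k. complex_of_real (\<alpha> k)"] trace_prod_wirtbar_sum_proj
    by simp
qed

end
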